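(* Let $(\mathcal M,g)$ be a semi-Riemannian manifold with Levi-Civita connection $\nabla$, let $\eta,\zeta\in\mathfrak X(\mathcal M)$ be arbitrary, $\mathcal K=\mathcal L_\eta g$, $\Sigma=\mathcal L_\eta\nabla$, $\zeta^\flat=g(\zeta,\cdot)$ and $(k^{(\zeta)})^\mu=\mathcal K^\mu{}_\beta\zeta^\beta$. Then $$\zeta^\alpha\Sigma_{\alpha\beta\mu}=\nabla_{(\beta}(\mathcal L_\eta\zeta^\flat)_{\mu)}-\tfrac12(\mathcal L_\eta\mathcal L_\zeta g)_{\beta\mu}$$ and $$\zeta^\alpha\Sigma_{\alpha\beta\mu}=\tfrac12(\mathcal L_{k^{(\zeta)}}g)_{\beta\mu}-\tfrac12(\mathcal L_\zeta\mathcal K)_{\beta\mu}.$$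
   Context: $\Sigma=\mathcal L_\eta\nabla$ is the $(1,2)$-tensor $\Sigma(V,W)=\mathcal L_\eta(\nabla_VW)-\nabla_{\mathcal L_\eta V}W-\nabla_V(\mathcal L_\eta W)$, and $\Sigma_{\alpha\beta\mu}=g_{\alpha\rho}\Sigma^\rho{}_{\beta\mu}$; equivalently $\Sigma_{\alpha\beta\mu}=\frac12(\nabla_\beta\mathcal K_{\alpha\mu}+\nabla_\mu\mathcal K_{\alpha\beta}-\nabla_\alpha\mathcal K_{\beta\mu})$. Index brackets denote symmetrization with weight $\frac12$. *)

theory Defs
  imports "HOL-Analysis.Analysis"
begin

text \<open>Local-coordinate model: a chart domain U (open subset of R^n, n = CARD('n)),
  tensor fields given by their components in the coordinate frame e_i = axis i 1.\<close>

type_synonym 'n vfield = "real^'n \<Rightarrow> real^'n"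
type_synonym 'n form1 = "real^'n \<Rightarrow> real^'n"
type_synonym 'n tens2 = "real^'n \<Rightarrow> real^'n^'n"

definition pd :: "'n::finite \<Rightarrow> (real^'n \<Rightarrow> real) \<Rightarrow> real^'n \<Rightarrow> real" where
  "pd i f x = deriv (\<lambda>t. f (x + t *\<^sub>R axis i 1)) 0"

fun ipd :: "'n::finite list \<Rightarrow> (real^'n \<Rightarrow> real) \<Rightarrow> real^'n \<Rightarrow> real" where
  "ipd [] f = f"
| "ipd (i # is) f = pd i (ipd is f)"

definition smooth_fun :: "(real^'n::finite) set \<Rightarrow> (real^'n \<Rightarrow> real) \<Rightarrow> bool" where
  "smooth_fun U f \<longleftrightarrow> (\<forall>is. ipd is f differentiable_on U)"

definition smooth_vf :: "(real^'n::finite) set \<Rightarrow> 'n vfield \<Rightarrow> bool" where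
  "smooth_vf U X \<longleftrightarrow> (\<forall>k. smooth_fun U (\<lambda>x. X x $ k))"

definition smooth_t2 :: "(real^'n::finite) set \<Rightarrow> 'n tens2 \<Rightarrow> bool" where
  "smooth_t2 U T \<longleftrightarrow> (\<forall>a b. smooth_fun U (\<lambda>x. T x $ a $ b))"

definition semi_riemannian :: "(real^'n::finite) set \<Rightarrow> 'n tens2 \<Rightarrow> bool" where
  "semi_riemannian U g \<longleftrightarrow> open U \<and> smooth_t2 U g \<and>
     (\<forall>x\<in>U. transpose (g x) = g x \<and> det (g x) \<noteq> 0)"

definition ginv :: "'n::finite tens2 \<Rightarrow> 'n tens2" where
  "ginv g x = matrix_inv (g x)"

definition dvf :: "'n::finite vfield \<Rightarrow> 'n vfield \<Rightarrow> 'n vfield" where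
  "dvf X Y x = (\<chi> k. \<Sum>i\<in>UNIV. X x $ i * pd i (\<lambda>y. Y y $ k) x)"

definition lie_vf :: "'n::finite vfield \<Rightarrow> 'n vfield \<Rightarrow> 'n vfield" where
  "lie_vf X Y x = dvf X Y x - dvf Y X x"

definition christoffel :: "'n::finite tens2 \<Rightarrow> real^'n \<Rightarrow> 'n \<Rightarrow> 'n \<Rightarrow> 'n \<Rightarrow> real" where
  "christoffel g x k i j = (\<Sum>l\<in>UNIV. ginv g x $ k $ l *
      (pd i (\<lambda>y. g y $ l $ j) x + pd j (\<lambda>y. g y $ l $ i) x - pd l (\<lambda>y. g y $ i $ j) x)) / 2"

definition lc_nabla :: "'n::finite tens2 \<Rightarrow> 'n vfield \<Rightarrow> 'n vfield \<Rightarrow> 'n vfield" where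
  "lc_nabla g X Y x = dvf X Y x +
     (\<chi> k. \<Sum>i\<in>UNIV. \<Sum>j\<in>UNIV. christoffel g x k i j * X x $ i * Y x $ j)"

definition lie_t2 :: "'n::finite vfield \<Rightarrow> 'n tens2 \<Rightarrow> 'n tens2" where
  "lie_t2 X T x = (\<chi> a b. (\<Sum>c\<in>UNIV. X x $ c * pd c (\<lambda>y. T y $ a $ b) x)
      + (\<Sum>c\<in>UNIV. T x $ c $ b * pd a (\<lambda>y. X y $ c) x)
      + (\<Sum>c\<in>UNIV. T x $ a $ c * pd b (\<lambda>y. X y $ c) x))"

definition lie_form :: "'n::finite vfield \<Rightarrow> 'n form1 \<Rightarrow> 'n form1" where
  "lie_form X w x = (\<chi> a. (\<Sum>c\<in>UNIV. X x $ c * pd c (\<lambda>y. w y $ a) x)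
      + (\<Sum>c\<in>UNIV. w x $ c * pd a (\<lambda>y. X y $ c) x))"

definition flat :: "'n::finite tens2 \<Rightarrow> 'n vfield \<Rightarrow> 'n form1" where
  "flat g Z x = (\<chi> a. \<Sum>b\<in>UNIV. g x $ a $ b * Z x $ b)"

text \<open>Covariant derivative of a 1-form: (nabla_b w)_m.\<close>
definition nabla_form :: "'n::finite tens2 \<Rightarrow> 'n form1 \<Rightarrow> real^'n \<Rightarrow> 'n \<Rightarrow> 'n \<Rightarrow> real" where
  "nabla_form g w x b m = pd b (\<lambda>y. w y $ m) x
      - (\<Sum>r\<in>UNIV. christoffel g x r b m * w x $ r)"

definition coord_vf :: "'n::finite \<Rightarrow> 'n vfield" where
  "coord_vf i x = axis i 1"

text \<open>Sigma = L_eta nabla as (1,2)-tensor: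
  Sigma(V,W) = L_eta(nabla_V W) - nabla_{L_eta V} W - nabla_V (L_eta W).\<close>
definition Sigma_op :: "'n::finite tens2 \<Rightarrow> 'n vfield \<Rightarrow> 'n vfield \<Rightarrow> 'n vfield \<Rightarrow> 'n vfield" where
  "Sigma_op g eta V W = (\<lambda>x. lie_vf eta (lc_nabla g V W) x
      - lc_nabla g (lie_vf eta V) W x - lc_nabla g V (lie_vf eta W) x)"

definition Sigma_up :: "'n::finite tens2 \<Rightarrow> 'n vfield \<Rightarrow> real^'n \<Rightarrow> 'n \<Rightarrow> 'n \<Rightarrow> 'n \<Rightarrow> real" where
  "Sigma_up g eta x r b m = Sigma_op g eta (coord_vf b) (coord_vf m) x $ r"

definition Sigma_low :: "'n::finite tens2 \<Rightarrow> 'n vfield \<Rightarrow> real^'n \<Rightarrow> 'n \<Rightarrow> 'n \<Rightarrow> 'n \<Rightarrow> real" where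
  "Sigma_low g eta x a b m = (\<Sum>r\<in>UNIV. g x $ a $ r * Sigma_up g eta x r b m)"

definition kzeta :: "'n::finite tens2 \<Rightarrow> 'n vfield \<Rightarrow> 'n vfield \<Rightarrow> 'n vfield" where
  "kzeta g eta Z x = (\<chi> m. \<Sum>a\<in>UNIV. \<Sum>b\<in>UNIV.
      ginv g x $ m $ a * lie_t2 eta g x $ a $ b * Z x $ b)"

end

theory Submission
  imports Defs
begin

(* Everything is evaluated at one point of the chart, with K = L_eta g. In coordinates
   Sigma_abm = [bm,a]_K - Gamma^r_bm K_ar, where [bm,a]_K = (d_b K_am + d_m K_ab - d_a K_bm)/2 is the
   Christoffel symbol of the first kind built from K; since K is symmetric and the connection is torsion
   free, this is (nabla_b K_am + nabla_m K_ab - nabla_a K_bm)/2. Contracting with zeta^a and expressing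
   L_k g and L_zeta K through covariant derivatives (L_X g = nabla X^flat plus its transpose, and
   k^flat = K zeta) gives the second formula. The first one reduces to the second, because
   L_eta zeta^flat = K zeta + [eta,zeta]^flat and L_eta L_zeta g - L_zeta L_eta g = L_[eta,zeta] g. *)

lemma sum_mult_sum_assoc:
  fixes f :: "'a \<Rightarrow> 'c::comm_semiring_0"
  shows "(\<Sum>c\<in>S. f c * (\<Sum>a\<in>A. h c a * q a)) = (\<Sum>a\<in>A. (\<Sum>c\<in>S. f c * h c a) * q a)"
  unfolding sum_distrib_left sum_distrib_right by (subst sum.swap) (simp add: mult.assoc)

lemma sum_mult_sum_swap:
  fixes f :: "'a \<Rightarrow> 'c::comm_semiring_0"
  shows "(\<Sum>r\<in>R. f r * (\<Sum>c\<in>C. h r c)) = (\<Sum>c\<in>C. \<Sum>r\<in>R. f r * h r c)"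
  unfolding sum_distrib_left by (rule sum.swap)

lemma double_sum_eq_by_symmetrization:
  fixes f h :: "'a \<Rightarrow> 'a \<Rightarrow> 'b::field_char_0"
  assumes "\<And>c d. f c d + f d c = h c d + h d c"
  shows "(\<Sum>c\<in>S. \<Sum>d\<in>S. f c d) = (\<Sum>c\<in>S. \<Sum>d\<in>S. h c d)"
proof -
  have double: "(\<Sum>c\<in>S. \<Sum>d\<in>S. k c d + k d c) = 2 * (\<Sum>c\<in>S. \<Sum>d\<in>S. k c d)"
    for k :: "'a \<Rightarrow> 'a \<Rightarrow> 'b"
  proof -
    have "(\<Sum>c\<in>S. \<Sum>d\<in>S. k d c) = (\<Sum>c\<in>S. \<Sum>d\<in>S. k c d)"
      by (rule sum.swap)
    then show ?thesis
      by (simp only: sum.distrib mult_2)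
  qed
  have "2 * (\<Sum>c\<in>S. \<Sum>d\<in>S. f c d) = 2 * (\<Sum>c\<in>S. \<Sum>d\<in>S. h c d)"
    unfolding double[symmetric] assms ..
  then show ?thesis
    by simp
qed

section \<open>Partial derivatives\<close>

lemma has_real_derivative_along_line:
  fixes f :: "real^'n::finite \<Rightarrow> real"
  assumes "(f has_derivative f') (at (p + s *\<^sub>R v))"
  shows "((\<lambda>t. f (p + t *\<^sub>R v)) has_real_derivative f' v) (at s)"
proof -
  have "((\<lambda>t. p + t *\<^sub>R v) has_derivative (\<lambda>h. h *\<^sub>R v)) (at s)"
    by (auto intro!: derivative_eq_intros)
  then have "((f \<circ> (\<lambda>t. p + t *\<^sub>R v)) has_derivative (f' \<circ> (\<lambda>h. h *\<^sub>R v))) (at s)"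
    by (rule diff_chain_at) (use assms in simp)
  moreover have "linear f'"
    using assms has_derivative_linear by blast
  ultimately show ?thesis
    unfolding has_field_derivative_def o_def by (simp add: linear_cmul mult.commute[of _ "f' v"])
qed

lemma pd_eqI:
  "((\<lambda>t. f (x + t *\<^sub>R axis i 1)) has_real_derivative d) (at 0) \<Longrightarrow> pd i f x = d"
  unfolding pd_def by (rule DERIV_imp_deriv)

lemma has_real_derivative_pd_along_line:
  fixes f :: "real^'n::finite \<Rightarrow> real"
  assumes "f differentiable (at (p + s *\<^sub>R axis i 1))"
  shows "((\<lambda>t. f (p + t *\<^sub>R axis i 1)) has_real_derivative pd i f (p + s *\<^sub>R axis i 1)) (at s)"
proof -
  obtain f' where f': "(f has_derivative f') (at (p + s *\<^sub>R axis i 1))"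
    using assms unfolding differentiable_def by blast
  have "pd i f (p + s *\<^sub>R axis i 1) = f' (axis i 1)"
    by (rule pd_eqI) (use has_real_derivative_along_line[of f f' _ 0] f' in simp)
  then show ?thesis
    using has_real_derivative_along_line[OF f'] by simp
qed

lemma has_real_derivative_pd:
  fixes f :: "real^'n::finite \<Rightarrow> real"
  assumes "f differentiable (at x)"
  shows "((\<lambda>t. f (x + t *\<^sub>R axis i 1)) has_real_derivative pd i f x) (at 0)"
  using has_real_derivative_pd_along_line[of f x 0 i] assms by simp

lemma pd_const [simp]: "pd i (\<lambda>y. c) x = 0"
  by (rule pd_eqI) simp

lemma pd_add:
  assumes "f differentiable (at x)" "h differentiable (at x)"
  shows "pd i (\<lambda>y. f y + h y) x = pd i f x + pd i h x"
  by (rule pd_eqI, rule DERIV_add) (use assms in \<open>simp_all add: has_real_derivative_pd\<close>)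

lemma pd_diff:
  assumes "f differentiable (at x)" "h differentiable (at x)"
  shows "pd i (\<lambda>y. f y - h y) x = pd i f x - pd i h x"
  by (rule pd_eqI, rule DERIV_diff) (use assms in \<open>simp_all add: has_real_derivative_pd\<close>)

lemma pd_minus:
  assumes "f differentiable (at x)"
  shows "pd i (\<lambda>y. - f y) x = - pd i f x"
  by (rule pd_eqI, rule DERIV_minus) (use assms in \<open>simp add: has_real_derivative_pd\<close>)

lemma pd_mult:
  assumes "f differentiable (at x)" "h differentiable (at x)"
  shows "pd i (\<lambda>y. f y * h y) x = f x * pd i h x + pd i f x * h x"
  by (rule pd_eqI) (use DERIV_mult'[OF has_real_derivative_pd[OF assms(1)] has_real_derivative_pd[OF assms(2)]] in simp)

lemma pd_divide_const:
  assumes "f differentiable (at x)"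
  shows "pd i (\<lambda>y. f y / c) x = pd i f x / c"
  by (rule pd_eqI, rule DERIV_cdivide) (use assms in \<open>simp add: has_real_derivative_pd\<close>)

lemma pd_sum:
  assumes "\<And>j. f j differentiable (at x)"
  shows "pd i (\<lambda>y. \<Sum>j\<in>S. f j y) x = (\<Sum>j\<in>S. pd i (f j) x)"
  by (rule pd_eqI, rule DERIV_sum) (use assms in \<open>simp add: has_real_derivative_pd\<close>)

lemmas pd_rules = pd_add pd_diff pd_minus pd_mult pd_divide_const pd_sum

lemma eventually_line_in_open:
  fixes U :: "(real^'n::finite) set"
  assumes "open U" "x \<in> U"
  shows "eventually (\<lambda>t. x + t *\<^sub>R v \<in> U) (nhds 0)"
proof -
  have "open ((\<lambda>t::real. x + t *\<^sub>R v) -` U)"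
    by (rule open_vimage[OF assms(1)]) (intro continuous_intros)
  from eventually_nhds_in_open[OF this] show ?thesis
    using assms(2) by simp
qed

lemma pd_cong_open:
  fixes U :: "(real^'n::finite) set"
  assumes "open U" "x \<in> U" "\<And>y. y \<in> U \<Longrightarrow> f y = h y"
  shows "pd i f x = pd i h x"
proof -
  have "eventually (\<lambda>t. f (x + t *\<^sub>R axis i 1) = h (x + t *\<^sub>R axis i 1)) (nhds 0)"
    using eventually_line_in_open[OF assms(1,2)] by eventually_elim (rule assms(3))
  then show ?thesis
    unfolding pd_def by (rule deriv_cong_ev) simp
qed

lemma differentiable_cong_open:
  fixes U :: "(real^'n::finite) set"
  assumes "open U" "x \<in> U" "\<And>y. y \<in> U \<Longrightarrow> f y = h y" "h differentiable (at x)"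
  shows "f differentiable (at x)"
proof -
  obtain r where "r > 0" "ball x r \<subseteq> U"
    using assms(1,2) open_contains_ball by blast
  then show ?thesis
    using differentiable_transform_within[of h x UNIV r f] assms(3,4)
    by (simp add: dist_commute subset_iff)
qed

lemma mixed_second_difference_mvt:
  fixes f :: "real^'n::finite \<Rightarrow> real"
  assumes h: "h > 0" and sub: "cball x (2 * h) \<subseteq> U"
    and df: "\<And>y. y \<in> U \<Longrightarrow> f differentiable (at y)"
    and dfi: "\<And>y. y \<in> U \<Longrightarrow> pd i f differentiable (at y)"
  shows "\<exists>q. dist q x \<le> 2 * h \<and>
    f (x + h *\<^sub>R axis j 1 + h *\<^sub>R axis i 1) - f (x + h *\<^sub>R axis i 1) - f (x + h *\<^sub>R axis j 1) + f x
      = h * h * pd j (pd i f) q"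
proof -
  let ?u = "axis i (1::real)" and ?v = "axis j (1::real)"
  have dist_le: "dist (x + a *\<^sub>R ?v + b *\<^sub>R ?u) x \<le> \<bar>a\<bar> + \<bar>b\<bar>" for a b
    using norm_triangle_ineq[of "a *\<^sub>R ?v" "b *\<^sub>R ?u"] by (simp add: dist_norm)
  have inU: "x + a *\<^sub>R ?v + b *\<^sub>R ?u \<in> U" if "0 \<le> a" "a \<le> h" "0 \<le> b" "b \<le> h" for a b
    using dist_le[of a b] that sub by (auto simp: dist_commute)
  define A where "A s = f (x + h *\<^sub>R ?v + s *\<^sub>R ?u) - f (x + s *\<^sub>R ?u)" for s
  have dA: "(A has_real_derivative pd i f (x + h *\<^sub>R ?v + s *\<^sub>R ?u) - pd i f (x + s *\<^sub>R ?u)) (at s)"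
    if "0 \<le> s" "s \<le> h" for s
    unfolding A_def using inU[of h s] inU[of 0 s] that h
    by (intro DERIV_diff has_real_derivative_pd_along_line df) auto
  obtain \<sigma> where \<sigma>: "0 < \<sigma>" "\<sigma> < h"
    and A_mvt: "A h - A 0 = h * (pd i f (x + h *\<^sub>R ?v + \<sigma> *\<^sub>R ?u) - pd i f (x + \<sigma> *\<^sub>R ?u))"
    using MVT2[of 0 h A "\<lambda>s. pd i f (x + h *\<^sub>R ?v + s *\<^sub>R ?u) - pd i f (x + s *\<^sub>R ?u)"] dA h
    by auto
  define B where "B t = pd i f (x + \<sigma> *\<^sub>R ?u + t *\<^sub>R ?v)" for t
  have dB: "(B has_real_derivative pd j (pd i f) (x + \<sigma> *\<^sub>R ?u + t *\<^sub>R ?v)) (at t)"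
    if "0 \<le> t" "t \<le> h" for t
    unfolding B_def using inU[of t \<sigma>] that \<sigma>
    by (intro has_real_derivative_pd_along_line dfi) (simp add: add_ac)
  obtain \<tau> where \<tau>: "0 < \<tau>" "\<tau> < h"
    and B_mvt: "B h - B 0 = h * pd j (pd i f) (x + \<sigma> *\<^sub>R ?u + \<tau> *\<^sub>R ?v)"
    using MVT2[of 0 h B "\<lambda>t. pd j (pd i f) (x + \<sigma> *\<^sub>R ?u + t *\<^sub>R ?v)"] dB h
    by auto
  have "B h - B 0 = pd i f (x + h *\<^sub>R ?v + \<sigma> *\<^sub>R ?u) - pd i f (x + \<sigma> *\<^sub>R ?u)"
    unfolding B_def by (simp add: algebra_simps)
  then have "A h - A 0 = h * h * pd j (pd i f) (x + \<sigma> *\<^sub>R ?u + \<tau> *\<^sub>R ?v)"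
    using A_mvt B_mvt by simp
  moreover have "dist (x + \<sigma> *\<^sub>R ?u + \<tau> *\<^sub>R ?v) x \<le> 2 * h"
    using dist_le[of \<tau> \<sigma>] \<sigma> \<tau> by (simp add: add_ac)
  ultimately show ?thesis
    unfolding A_def by (intro exI[of _ "x + \<sigma> *\<^sub>R ?u + \<tau> *\<^sub>R ?v"]) (simp add: algebra_simps)
qed

text \<open>Schwarz's theorem: both mixed partials equal the limit of the same second difference quotient.\<close>

lemma pd_commute:
  fixes f :: "real^'n::finite \<Rightarrow> real"
  assumes U: "open U" "x \<in> U"
    and df: "\<And>y. y \<in> U \<Longrightarrow> f differentiable (at y)"
    and dfi: "\<And>y. y \<in> U \<Longrightarrow> pd i f differentiable (at y)"
    and dfj: "\<And>y. y \<in> U \<Longrightarrow> pd j f differentiable (at y)"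
    and cont: "continuous (at x) (pd j (pd i f))" "continuous (at x) (pd i (pd j f))"
  shows "pd j (pd i f) x = pd i (pd j f) x"
proof (rule ccontr)
  assume ne: "pd j (pd i f) x \<noteq> pd i (pd j f) x"
  define e where "e = \<bar>pd j (pd i f) x - pd i (pd j f) x\<bar> / 2"
  have e: "e > 0"
    using ne by (simp add: e_def)
  obtain d1 where d1: "d1 > 0" "\<And>q. dist q x < d1 \<Longrightarrow> \<bar>pd j (pd i f) q - pd j (pd i f) x\<bar> < e"
    using cont(1)[unfolded continuous_at_eps_delta, rule_format, OF e] by (auto simp: dist_real_def)
  obtain d2 where d2: "d2 > 0" "\<And>q. dist q x < d2 \<Longrightarrow> \<bar>pd i (pd j f) q - pd i (pd j f) x\<bar> < e"
    using cont(2)[unfolded continuous_at_eps_delta, rule_format, OF e] by (auto simp: dist_real_def)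
  obtain r where r: "r > 0" "cball x r \<subseteq> U"
    using U open_contains_cball by blast
  define h where "h = min (min d1 d2) r / 4"
  have h: "h > 0" "2 * h < d1" "2 * h < d2" "2 * h \<le> r"
    using d1 d2 r by (auto simp: h_def)
  then have sub: "cball x (2 * h) \<subseteq> U"
    using r(2) by (meson order.trans subset_cball)
  obtain q1 where q1: "dist q1 x \<le> 2 * h"
    "f (x + h *\<^sub>R axis j 1 + h *\<^sub>R axis i 1) - f (x + h *\<^sub>R axis i 1) - f (x + h *\<^sub>R axis j 1) + f x
      = h * h * pd j (pd i f) q1"
    using mixed_second_difference_mvt[OF h(1) sub df dfi] by blast
  obtain q2 where q2: "dist q2 x \<le> 2 * h"
    "f (x + h *\<^sub>R axis i 1 + h *\<^sub>R axis j 1) - f (x + h *\<^sub>R axis j 1) - f (x + h *\<^sub>R axis i 1) + f x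
      = h * h * pd i (pd j f) q2"
    using mixed_second_difference_mvt[OF h(1) sub df dfj] by blast
  have "h * h * pd j (pd i f) q1 = h * h * pd i (pd j f) q2"
    using q1(2) q2(2) by (simp add: algebra_simps)
  then have "pd j (pd i f) q1 = pd i (pd j f) q2"
    using h(1) by simp
  moreover have "\<bar>pd j (pd i f) q1 - pd j (pd i f) x\<bar> < e" "\<bar>pd i (pd j f) q2 - pd i (pd j f) x\<bar> < e"
    using d1(2) d2(2) q1(1) q2(1) h by auto
  ultimately show False
    unfolding e_def by (auto simp: abs_if split: if_splits)
qed

lemma smooth_fun_ipd_differentiable:
  "smooth_fun U f \<Longrightarrow> open U \<Longrightarrow> x \<in> U \<Longrightarrow> ipd is f differentiable (at x)"
  unfolding smooth_fun_def using differentiable_on_eq_differentiable_at by blast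

lemma smooth_fun_differentiable:
  assumes "smooth_fun U f" "open U" "x \<in> U"
  shows "f differentiable (at x)" "pd i f differentiable (at x)"
  using smooth_fun_ipd_differentiable[OF assms, of "[]"] smooth_fun_ipd_differentiable[OF assms, of "[i]"]
  by simp_all

lemma smooth_fun_pd_commute:
  assumes "smooth_fun U f" "open U" "x \<in> U"
  shows "pd j (pd i f) x = pd i (pd j f) x"
proof (rule pd_commute[OF assms(2,3)])
  show "continuous (at x) (pd j (pd i f))" "continuous (at x) (pd i (pd j f))"
    using smooth_fun_ipd_differentiable[OF assms, of "[j, i]"] smooth_fun_ipd_differentiable[OF assms, of "[i, j]"]
    by (simp_all add: differentiable_imp_continuous_within)
qed (use smooth_fun_differentiable[OF assms(1,2)] in auto)

lemma smooth_vf_differentiable: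
  assumes "smooth_vf U X" "open U" "x \<in> U"
  shows "(\<lambda>y. X y $ k) differentiable (at x)" "pd c (\<lambda>y. X y $ k) differentiable (at x)"
  using assms smooth_fun_differentiable unfolding smooth_vf_def by blast+

lemma smooth_vf_pd_commute:
  "smooth_vf U X \<Longrightarrow> open U \<Longrightarrow> x \<in> U \<Longrightarrow> pd i (pd j (\<lambda>y. X y $ k)) x = pd j (pd i (\<lambda>y. X y $ k)) x"
  unfolding smooth_vf_def by (blast intro: smooth_fun_pd_commute)

lemma smooth_t2_differentiable:
  assumes "smooth_t2 U T" "open U" "x \<in> U"
  shows "(\<lambda>y. T y $ a $ b) differentiable (at x)" "pd c (\<lambda>y. T y $ a $ b) differentiable (at x)"
  using assms smooth_fun_differentiable unfolding smooth_t2_def by blast+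

lemma smooth_t2_pd_commute:
  "smooth_t2 U T \<Longrightarrow> open U \<Longrightarrow> x \<in> U \<Longrightarrow> pd i (pd j (\<lambda>y. T y $ a $ b)) x = pd j (pd i (\<lambda>y. T y $ a $ b)) x"
  unfolding smooth_t2_def by (blast intro: smooth_fun_pd_commute)

lemma matrix_inv_right:
  fixes A :: "real^'n::finite^'n"
  assumes "det A \<noteq> 0"
  shows "A ** matrix_inv A = mat 1"
proof -
  have "\<exists>A'. A ** A' = mat 1 \<and> A' ** A = mat 1"
    using assms invertible_det_nz unfolding invertible_def by blast
  from someI_ex[OF this] show ?thesis
    unfolding matrix_inv_def by blast
qed

lemma matrix_inv_cramer:
  fixes A :: "real^'n::finite^'n"
  assumes "det A \<noteq> 0"
  shows "matrix_inv A $ k $ l = det (\<chi> r s. if s = k then axis l 1 $ r else A $ r $ s) / det A"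
proof -
  have "A *v (matrix_inv A *v axis l 1) = axis l 1"
    by (simp add: matrix_vector_mul_assoc matrix_inv_right[OF assms])
  then have "(matrix_inv A *v axis l 1) $ k = det (\<chi> r s. if s = k then axis l 1 $ r else A $ r $ s) / det A"
    using cramer[OF assms] by simp
  moreover have "(matrix_inv A *v axis l 1) $ k = matrix_inv A $ k $ l"
    by (simp add: matrix_vector_mult_def axis_def if_distrib cong: if_cong)
  ultimately show ?thesis
    by simp
qed

lemma differentiable_prod:
  fixes f :: "'i \<Rightarrow> real^'n::finite \<Rightarrow> real"
  assumes "\<And>i. f i differentiable (at x)"
  shows "(\<lambda>y. \<Prod>i\<in>I. f i y) differentiable (at x)"
proof -
  obtain f' where "\<And>i. (f i has_derivative f' i) (at x)"
    using assms unfolding differentiable_def by metis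
  then show ?thesis
    unfolding differentiable_def by (blast intro: has_derivative_prod)
qed

lemma differentiable_det:
  fixes A :: "real^'n::finite \<Rightarrow> real^'m::finite^'m"
  assumes "\<And>i j. (\<lambda>y. A y $ i $ j) differentiable (at x)"
  shows "(\<lambda>y. det (A y)) differentiable (at x)"
proof -
  have "(\<lambda>y. \<Prod>i\<in>UNIV. A y $ i $ p i) differentiable (at x)" for p
    by (rule differentiable_prod) (rule assms)
  then show ?thesis
    unfolding det_def by simp
qed

section \<open>Lie and covariant derivatives in a chart\<close>

lemma lie_t2_differentiable:
  fixes U :: "(real^'n::finite) set"
  assumes "open U" "x \<in> U" "smooth_vf U X" "smooth_t2 U T"
  shows "(\<lambda>y. lie_t2 X T y $ a $ b) differentiable (at x)"
  using smooth_vf_differentiable[OF assms(3,1,2)] smooth_t2_differentiable[OF assms(4,1,2)]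
  by (simp add: lie_t2_def)

lemma lie_vf_differentiable:
  fixes U :: "(real^'n::finite) set"
  assumes "open U" "x \<in> U" "smooth_vf U X" "smooth_vf U Y"
  shows "(\<lambda>y. lie_vf X Y y $ k) differentiable (at x)"
  using smooth_vf_differentiable[OF assms(3,1,2)] smooth_vf_differentiable[OF assms(4,1,2)]
  by (simp add: lie_vf_def dvf_def)

lemma flat_differentiable:
  assumes "\<And>a b. (\<lambda>y. T y $ a $ b) differentiable (at x)" "\<And>c. (\<lambda>y. Y y $ c) differentiable (at x)"
  shows "(\<lambda>y. flat T Y y $ m) differentiable (at x)"
  using assms by (simp add: flat_def)

lemma lie_t2_sym:
  fixes U :: "(real^'n::finite) set"
  assumes "open U" "y \<in> U" "\<And>z a b. z \<in> U \<Longrightarrow> T z $ a $ b = T z $ b $ a"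
  shows "lie_t2 X T y $ a $ b = lie_t2 X T y $ b $ a"
proof -
  have "pd c (\<lambda>z. T z $ a $ b) y = pd c (\<lambda>z. T z $ b $ a) y" for c
    using assms by (intro pd_cong_open) auto
  then show ?thesis
    using assms(2,3) by (simp add: lie_t2_def add.commute add.left_commute)
qed

lemma lie_form_flat:
  assumes T: "\<And>a b. (\<lambda>z. T z $ a $ b) differentiable (at y)"
    and Y: "\<And>c. (\<lambda>z. Y z $ c) differentiable (at y)"
  shows "lie_form X (flat T Y) y = flat (lie_t2 X T) Y y + flat T (lie_vf X Y) y"
proof -
  have lhs: "lie_form X (flat T Y) y $ m = (\<Sum>c\<in>UNIV. \<Sum>d\<in>UNIV.
      X y $ c * T y $ m $ d * pd c (\<lambda>z. Y z $ d) y + X y $ c * pd c (\<lambda>z. T z $ m $ d) y * Y y $ d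
      + T y $ c $ d * Y y $ d * pd m (\<lambda>z. X z $ c) y)" for m
    using T Y by (simp add: lie_form_def flat_def pd_rules sum_distrib_left sum.distrib algebra_simps)
  have rhs: "(flat (lie_t2 X T) Y y + flat T (lie_vf X Y) y) $ m = (\<Sum>c\<in>UNIV. \<Sum>d\<in>UNIV.
      X y $ d * pd d (\<lambda>z. T z $ m $ c) y * Y y $ c + T y $ d $ c * pd m (\<lambda>z. X z $ d) y * Y y $ c
      + T y $ m $ d * pd c (\<lambda>z. X z $ d) y * Y y $ c
      + T y $ m $ c * X y $ d * pd d (\<lambda>z. Y z $ c) y - T y $ m $ c * Y y $ d * pd d (\<lambda>z. X z $ c) y)" for m
    by (simp add: lie_t2_def lie_vf_def dvf_def flat_def sum_distrib_left sum_distrib_right sum.distrib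
        sum_subtractf algebra_simps)
  show ?thesis
    unfolding vec_eq_iff lhs rhs by (intro allI double_sum_eq_by_symmetrization) (simp add: algebra_simps)
qed

lemma lie_t2_commutator:
  fixes U :: "(real^'n::finite) set"
  assumes U: "open U" "x \<in> U"
    and X: "smooth_vf U X" and Y: "smooth_vf U Y" and T: "smooth_t2 U T"
  shows "lie_t2 X (lie_t2 Y T) x $ a $ b - lie_t2 Y (lie_t2 X T) x $ a $ b = lie_t2 (lie_vf X Y) T x $ a $ b"
proof -
  note diff = smooth_vf_differentiable[OF X U] smooth_vf_differentiable[OF Y U] smooth_t2_differentiable[OF T U]
  note commute = smooth_vf_pd_commute[OF X U] smooth_vf_pd_commute[OF Y U] smooth_t2_pd_commute[OF T U]
  define G where "G V W p q =
      V x $ p * pd p (\<lambda>y. W y $ q) x * pd q (\<lambda>y. T y $ a $ b) x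
    + V x $ p * W x $ q * pd p (pd q (\<lambda>y. T y $ a $ b)) x
    + V x $ p * pd p (\<lambda>y. T y $ q $ b) x * pd a (\<lambda>y. W y $ q) x
    + V x $ p * T x $ q $ b * pd p (pd a (\<lambda>y. W y $ q)) x
    + V x $ p * pd p (\<lambda>y. T y $ a $ q) x * pd b (\<lambda>y. W y $ q) x
    + V x $ p * T x $ a $ q * pd p (pd b (\<lambda>y. W y $ q)) x
    + W x $ q * pd q (\<lambda>y. T y $ p $ b) x * pd a (\<lambda>y. V y $ p) x
    + T x $ q $ b * pd p (\<lambda>y. W y $ q) x * pd a (\<lambda>y. V y $ p) x
    + T x $ p $ q * pd b (\<lambda>y. W y $ q) x * pd a (\<lambda>y. V y $ p) x
    + W x $ q * pd q (\<lambda>y. T y $ a $ p) x * pd b (\<lambda>y. V y $ p) x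
    + T x $ q $ p * pd a (\<lambda>y. W y $ q) x * pd b (\<lambda>y. V y $ p) x
    + T x $ a $ q * pd p (\<lambda>y. W y $ q) x * pd b (\<lambda>y. V y $ p) x" for V W :: "'n vfield" and p q
  have lie_lie: "lie_t2 V (lie_t2 W T) x $ a $ b = (\<Sum>p\<in>UNIV. \<Sum>q\<in>UNIV. G V W p q)"
    if V: "smooth_vf U V" and W: "smooth_vf U W" for V W
    using smooth_vf_differentiable[OF V U] smooth_vf_differentiable[OF W U] smooth_t2_differentiable[OF T U]
    by (simp add: G_def lie_t2_def pd_rules sum_distrib_left sum_distrib_right sum.distrib algebra_simps)
  have bracket: "lie_t2 (lie_vf X Y) T x $ a $ b = (\<Sum>p\<in>UNIV. \<Sum>q\<in>UNIV.
      (X x $ q * pd q (\<lambda>y. Y y $ p) x - Y x $ q * pd q (\<lambda>y. X y $ p) x) * pd p (\<lambda>y. T y $ a $ b) x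
    + T x $ p $ b * (pd a (\<lambda>y. X y $ q) x * pd q (\<lambda>y. Y y $ p) x + X x $ q * pd a (pd q (\<lambda>y. Y y $ p)) x
        - pd a (\<lambda>y. Y y $ q) x * pd q (\<lambda>y. X y $ p) x - Y x $ q * pd a (pd q (\<lambda>y. X y $ p)) x)
    + T x $ a $ p * (pd b (\<lambda>y. X y $ q) x * pd q (\<lambda>y. Y y $ p) x + X x $ q * pd b (pd q (\<lambda>y. Y y $ p)) x
        - pd b (\<lambda>y. Y y $ q) x * pd q (\<lambda>y. X y $ p) x - Y x $ q * pd b (pd q (\<lambda>y. X y $ p)) x))"
    using diff
    by (simp add: lie_t2_def lie_vf_def dvf_def pd_rules sum_distrib_left sum_distrib_right sum.distrib
        sum_subtractf algebra_simps)
  text \<open>After symmetrizing in \<open>p\<close> and \<open>q\<close>, the second derivatives cancel by Schwarz's theorem.\<close>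
  show ?thesis
    unfolding lie_lie[OF X Y] lie_lie[OF Y X] bracket sum_subtractf[symmetric]
    by (rule double_sum_eq_by_symmetrization) (simp add: G_def commute algebra_simps)
qed

definition christoffel_first_kind :: "'n::finite tens2 \<Rightarrow> real^'n \<Rightarrow> 'n \<Rightarrow> 'n \<Rightarrow> 'n \<Rightarrow> real" where
  "christoffel_first_kind T x a i j =
     (pd i (\<lambda>y. T y $ a $ j) x + pd j (\<lambda>y. T y $ a $ i) x - pd a (\<lambda>y. T y $ i $ j) x) / 2"

lemma christoffel_eq:
  "christoffel g x k i j = (\<Sum>l\<in>UNIV. ginv g x $ k $ l * christoffel_first_kind g x l i j)"
  unfolding christoffel_def christoffel_first_kind_def by (simp add: sum_divide_distrib)

text \<open>\<open>nabla_vf g X x c k\<close> is \<open>(\<nabla>\<^sub>c X)\<^sup>k\<close> and \<open>nabla_t2 g T x c a b\<close> is \<open>(\<nabla>\<^sub>c T)\<^sub>a\<^sub>b\<close>,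
  in the index convention of \<open>nabla_form\<close>.\<close>

definition nabla_vf :: "'n::finite tens2 \<Rightarrow> 'n vfield \<Rightarrow> real^'n \<Rightarrow> 'n \<Rightarrow> 'n \<Rightarrow> real" where
  "nabla_vf g X x c k = pd c (\<lambda>y. X y $ k) x + (\<Sum>r\<in>UNIV. christoffel g x k c r * X x $ r)"

definition nabla_t2 :: "'n::finite tens2 \<Rightarrow> 'n tens2 \<Rightarrow> real^'n \<Rightarrow> 'n \<Rightarrow> 'n \<Rightarrow> 'n \<Rightarrow> real" where
  "nabla_t2 g T x c a b = pd c (\<lambda>y. T y $ a $ b) x
     - (\<Sum>r\<in>UNIV. christoffel g x r c a * T x $ r $ b) - (\<Sum>r\<in>UNIV. christoffel g x r c b * T x $ a $ r)"

lemma nabla_t2_sym: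
  fixes U :: "(real^'n::finite) set"
  assumes "open U" "x \<in> U" "\<And>z a b. z \<in> U \<Longrightarrow> T z $ a $ b = T z $ b $ a"
  shows "nabla_t2 g T x c a b = nabla_t2 g T x c b a"
proof -
  have "pd c (\<lambda>z. T z $ a $ b) x = pd c (\<lambda>z. T z $ b $ a) x"
    using assms by (intro pd_cong_open) auto
  then show ?thesis
    using assms(2,3) by (simp add: nabla_t2_def algebra_simps)
qed

lemma lie_t2_eq_nabla:
  assumes sym: "\<And>k i j. christoffel g x k i j = christoffel g x k j i"
  shows "lie_t2 X T x $ a $ b = (\<Sum>c\<in>UNIV. X x $ c * nabla_t2 g T x c a b)
     + (\<Sum>c\<in>UNIV. T x $ c $ b * nabla_vf g X x a c) + (\<Sum>c\<in>UNIV. T x $ a $ c * nabla_vf g X x b c)"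
proof -
  have left: "(\<Sum>c\<in>UNIV. X x $ c * (\<Sum>r\<in>UNIV. christoffel g x r c a * T x $ r $ b))
      = (\<Sum>c\<in>UNIV. T x $ c $ b * (\<Sum>r\<in>UNIV. christoffel g x c a r * X x $ r))"
    unfolding sum_distrib_left by (subst sum.swap) (simp add: sym[of _ a] mult_ac)
  have right: "(\<Sum>c\<in>UNIV. X x $ c * (\<Sum>r\<in>UNIV. christoffel g x r c b * T x $ a $ r))
      = (\<Sum>c\<in>UNIV. T x $ a $ c * (\<Sum>r\<in>UNIV. christoffel g x c b r * X x $ r))"
    unfolding sum_distrib_left by (subst sum.swap) (simp add: sym[of _ b] mult_ac)
  show ?thesis
    unfolding nabla_t2_def nabla_vf_def ring_distribs sum.distrib sum_subtractf left right
    by (simp add: lie_t2_def)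
qed

lemma nabla_form_flat:
  assumes "\<And>a b. (\<lambda>y. T y $ a $ b) differentiable (at x)" "\<And>c. (\<lambda>y. X y $ c) differentiable (at x)"
  shows "nabla_form g (flat T X) x b m
    = (\<Sum>c\<in>UNIV. nabla_t2 g T x b m c * X x $ c) + (\<Sum>c\<in>UNIV. T x $ m $ c * nabla_vf g X x b c)"
proof -
  have pd_flat: "pd b (\<lambda>y. flat T X y $ m) x
      = (\<Sum>c\<in>UNIV. T x $ m $ c * pd b (\<lambda>y. X y $ c) x + pd b (\<lambda>y. T y $ m $ c) x * X x $ c)"
    unfolding flat_def using assms by (simp add: pd_rules)
  have first: "(\<Sum>r\<in>UNIV. christoffel g x r b m * flat T X x $ r)
      = (\<Sum>c\<in>UNIV. (\<Sum>r\<in>UNIV. christoffel g x r b m * T x $ r $ c) * X x $ c)"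
    unfolding flat_def vec_lambda_beta sum_distrib_left sum_distrib_right by (subst sum.swap) (simp add: mult_ac)
  have second: "(\<Sum>c\<in>UNIV. (\<Sum>r\<in>UNIV. christoffel g x r b c * T x $ m $ r) * X x $ c)
      = (\<Sum>c\<in>UNIV. T x $ m $ c * (\<Sum>r\<in>UNIV. christoffel g x c b r * X x $ r))"
    unfolding sum_distrib_left sum_distrib_right by (subst sum.swap) (simp add: mult_ac)
  show ?thesis
    unfolding nabla_form_def nabla_t2_def nabla_vf_def pd_flat first
    by (simp add: ring_distribs sum.distrib sum_subtractf second flip: sum_distrib_right)
qed

lemma nabla_t2_cyclic_sum:
  assumes sym: "\<And>k i j. christoffel g x k i j = christoffel g x k j i"
    and T_sym: "\<And>i j. T x $ i $ j = T x $ j $ i"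
  shows "(nabla_t2 g T x b a m + nabla_t2 g T x m a b - nabla_t2 g T x a b m) / 2
    = christoffel_first_kind T x a b m - (\<Sum>r\<in>UNIV. christoffel g x r b m * T x $ a $ r)"
  unfolding nabla_t2_def christoffel_first_kind_def
  by (simp add: sym[of _ a] sym[of _ m b] T_sym[of _ a] T_sym[of b] field_simps)

lemma nabla_form_cong_open:
  fixes U :: "(real^'n::finite) set"
  assumes "open U" "x \<in> U" "\<And>y. y \<in> U \<Longrightarrow> w y = w' y"
  shows "nabla_form g w x b m = nabla_form g w' x b m"
  using pd_cong_open[OF assms(1,2), of "\<lambda>y. w y $ m" "\<lambda>y. w' y $ m" b] assms
  by (simp add: nabla_form_def)

lemma nabla_form_add:
  assumes "\<And>m. (\<lambda>y. w y $ m) differentiable (at x)" "\<And>m. (\<lambda>y. w' y $ m) differentiable (at x)"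
  shows "nabla_form g (\<lambda>y. w y + w' y) x b m = nabla_form g w x b m + nabla_form g w' x b m"
  using assms by (simp add: nabla_form_def pd_add sum.distrib algebra_simps)

lemma axis_real_nth: "axis i (1::real) $ j = of_bool (j = i)"
  by (simp add: axis_def)

lemma lc_nabla_coord_right: "lc_nabla g W (coord_vf m) y $ k = (\<Sum>i\<in>UNIV. christoffel g y k i m * W y $ i)"
  by (simp add: lc_nabla_def dvf_def coord_vf_def axis_real_nth mult.assoc[symmetric])

lemma lc_nabla_coord_left: "lc_nabla g (coord_vf b) W y $ k = pd b (\<lambda>z. W z $ k) y + (\<Sum>j\<in>UNIV. christoffel g y k b j * W y $ j)"
  by (simp add: lc_nabla_def dvf_def coord_vf_def axis_real_nth mult.commute[of _ "of_bool _"] mult.left_commute[of _ "of_bool _"] mult.assoc flip: sum_distrib_left)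

lemma lie_vf_coord: "lie_vf X (coord_vf b) y $ k = - pd b (\<lambda>z. X z $ k) y"
  by (simp add: lie_vf_def dvf_def coord_vf_def axis_real_nth)

lemma Sigma_up_eq:
  assumes "\<And>k. pd m (\<lambda>y. X y $ k) differentiable (at x)"
  shows "Sigma_up g X x r b m = (\<Sum>c\<in>UNIV.
      X x $ c * pd c (\<lambda>y. christoffel g y r b m) x - christoffel g x c b m * pd c (\<lambda>y. X y $ r) x
    + christoffel g x r c m * pd b (\<lambda>y. X y $ c) x + christoffel g x r b c * pd m (\<lambda>y. X y $ c) x)
    + pd b (pd m (\<lambda>y. X y $ r)) x"
proof -
  have coord: "lc_nabla g (coord_vf b) (coord_vf m) y $ k = christoffel g y k b m" for y k
    by (simp add: lc_nabla_coord_right coord_vf_def axis_real_nth mult.commute)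
  show ?thesis
    unfolding Sigma_up_def Sigma_op_def vector_minus_component lc_nabla_coord_right lc_nabla_coord_left lie_vf_coord
    using assms by (simp add: coord lie_vf_def dvf_def pd_minus sum.distrib sum_subtractf sum_negf algebra_simps)
qed

section \<open>The Levi-Civita connection of a semi-Riemannian metric\<close>

context
  fixes U :: "(real^'n::finite) set" and g :: "'n tens2"
  assumes g_metric: "semi_riemannian U g"
begin

lemma metric_open: "open U"
  using g_metric by (simp add: semi_riemannian_def)

lemma metric_smooth: "smooth_t2 U g"
  using g_metric by (simp add: semi_riemannian_def)

lemma metric_sym: "y \<in> U \<Longrightarrow> g y $ a $ b = g y $ b $ a"
  using g_metric by (simp add: semi_riemannian_def vec_eq_iff transpose_def)

lemma metric_pd_sym: "y \<in> U \<Longrightarrow> pd c (\<lambda>z. g z $ a $ b) y = pd c (\<lambda>z. g z $ b $ a) y"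
  by (rule pd_cong_open[OF metric_open]) (auto intro: metric_sym)

lemma metric_pd2_sym: "x \<in> U \<Longrightarrow> pd d (pd c (\<lambda>z. g z $ a $ b)) x = pd d (pd c (\<lambda>z. g z $ b $ a)) x"
  by (rule pd_cong_open[OF metric_open]) (auto intro: metric_pd_sym)

lemma metric_mult_ginv: "y \<in> U \<Longrightarrow> (\<Sum>r\<in>UNIV. g y $ a $ r * ginv g y $ r $ l) = (if a = l then 1 else 0)"
  using g_metric matrix_inv_right[of "g y"]
  by (simp add: semi_riemannian_def ginv_def vec_eq_iff matrix_matrix_mult_def mat_def)

lemma ginv_differentiable:
  assumes x: "x \<in> U"
  shows "(\<lambda>y. ginv g y $ k $ l) differentiable (at x)"
proof (rule differentiable_cong_open[OF metric_open x])
  show "ginv g y $ k $ l = det (\<chi> r s. if s = k then axis l 1 $ r else g y $ r $ s) / det (g y)" if "y \<in> U" for y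
    using g_metric that by (simp add: ginv_def semi_riemannian_def matrix_inv_cramer)
  have "(\<lambda>y. (\<chi> r s. if s = k then axis l 1 $ r else g y $ r $ s) $ r $ s) differentiable (at x)" for r s
    using smooth_t2_differentiable[OF metric_smooth metric_open x] by (cases "s = k") auto
  then show "(\<lambda>y. det (\<chi> r s. if s = k then axis l 1 $ r else g y $ r $ s) / det (g y)) differentiable (at x)"
    using g_metric x smooth_t2_differentiable[OF metric_smooth metric_open x]
    by (intro differentiable_divide differentiable_det) (auto simp: semi_riemannian_def)
qed

lemma christoffel_differentiable: "x \<in> U \<Longrightarrow> (\<lambda>y. christoffel g y k i j) differentiable (at x)"
  unfolding christoffel_def
  using smooth_t2_differentiable[OF metric_smooth metric_open] ginv_differentiable by simp

lemma christoffel_sym: "x \<in> U \<Longrightarrow> christoffel g x k i j = christoffel g x k j i"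
  unfolding christoffel_def by (simp add: metric_pd_sym[of x _ i j] add.commute)

lemma lower_christoffel:
  assumes "x \<in> U"
  shows "(\<Sum>r\<in>UNIV. g x $ a $ r * christoffel g x r i j) = christoffel_first_kind g x a i j"
  unfolding christoffel_eq sum_mult_sum_assoc by (simp add: metric_mult_ginv[OF assms] of_bool_def[symmetric])

lemma nabla_t2_metric:
  assumes "x \<in> U"
  shows "nabla_t2 g g x c a b = 0"
proof -
  have "(\<Sum>r\<in>UNIV. christoffel g x r c a * g x $ r $ b) = christoffel_first_kind g x b c a"
    "(\<Sum>r\<in>UNIV. christoffel g x r c b * g x $ a $ r) = christoffel_first_kind g x a c b"
    using lower_christoffel[OF assms] by (simp_all add: metric_sym[OF assms, of _ b] metric_sym[OF assms, of _ a] mult.commute)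
  then show ?thesis
    unfolding nabla_t2_def christoffel_first_kind_def
    using metric_pd_sym[OF assms] by (simp add: field_simps)
qed

lemma lie_t2_metric_eq_nabla_form:
  assumes x: "x \<in> U" and X: "\<And>c. (\<lambda>y. X y $ c) differentiable (at x)"
  shows "lie_t2 X g x $ a $ b = nabla_form g (flat g X) x a b + nabla_form g (flat g X) x b a"
  using lie_t2_eq_nabla[OF christoffel_sym[OF x]] nabla_t2_metric[OF x]
    nabla_form_flat[OF smooth_t2_differentiable(1)[OF metric_smooth metric_open x] X]
  by (simp add: metric_sym[OF x, of _ b])

lemma flat_kzeta:
  assumes "y \<in> U"
  shows "flat g (kzeta g X Z) y = flat (lie_t2 X g) Z y"
proof -
  let ?Q = "\<lambda>a. \<Sum>b\<in>UNIV. lie_t2 X g y $ a $ b * Z y $ b"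
  have "kzeta g X Z y $ c = (\<Sum>a\<in>UNIV. ginv g y $ c $ a * ?Q a)" for c
    unfolding kzeta_def by (simp add: sum_distrib_left mult.assoc)
  then have "(\<Sum>c\<in>UNIV. g y $ m $ c * kzeta g X Z y $ c)
      = (\<Sum>a\<in>UNIV. (\<Sum>c\<in>UNIV. g y $ m $ c * ginv g y $ c $ a) * ?Q a)" for m
    by (simp only: sum_mult_sum_assoc)
  then show ?thesis
    unfolding flat_def by (simp add: vec_eq_iff metric_mult_ginv[OF assms] of_bool_def[symmetric])
qed

lemma kzeta_differentiable:
  assumes "x \<in> U" "smooth_vf U X" "smooth_vf U Z"
  shows "(\<lambda>y. kzeta g X Z y $ k) differentiable (at x)"
  using ginv_differentiable[OF assms(1)] smooth_vf_differentiable[OF assms(3) metric_open assms(1)]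
    lie_t2_differentiable[OF metric_open assms(1,2) metric_smooth]
  by (simp add: kzeta_def)

lemma pd_lower_christoffel:
  assumes x: "x \<in> U"
  shows "(\<Sum>r\<in>UNIV. g x $ a $ r * pd c (\<lambda>y. christoffel g y r i j) x)
    = pd c (\<lambda>y. christoffel_first_kind g y a i j) x - (\<Sum>r\<in>UNIV. pd c (\<lambda>y. g y $ a $ r) x * christoffel g x r i j)"
proof -
  have "pd c (\<lambda>y. christoffel_first_kind g y a i j) x = pd c (\<lambda>y. \<Sum>r\<in>UNIV. g y $ a $ r * christoffel g y r i j) x"
    using lower_christoffel by (intro pd_cong_open[OF metric_open x]) simp
  also have "\<dots> = (\<Sum>r\<in>UNIV. g x $ a $ r * pd c (\<lambda>y. christoffel g y r i j) x + pd c (\<lambda>y. g y $ a $ r) x * christoffel g x r i j)"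
    using smooth_t2_differentiable[OF metric_smooth metric_open x] christoffel_differentiable[OF x]
    by (simp add: pd_rules)
  finally show ?thesis
    by (simp add: sum.distrib)
qed

lemma christoffel_first_kind_lie_t2:
  assumes x: "x \<in> U" and X: "smooth_vf U X"
  shows "christoffel_first_kind (lie_t2 X g) x a b m = (\<Sum>c\<in>UNIV.
      X x $ c * pd c (\<lambda>y. christoffel_first_kind g y a b m) x
    + christoffel_first_kind g x c b m * pd a (\<lambda>y. X y $ c) x
    + christoffel_first_kind g x a c m * pd b (\<lambda>y. X y $ c) x
    + christoffel_first_kind g x a b c * pd m (\<lambda>y. X y $ c) x
    + g x $ a $ c * pd b (pd m (\<lambda>y. X y $ c)) x)"
  using smooth_vf_differentiable[OF X metric_open x] smooth_t2_differentiable[OF metric_smooth metric_open x]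
  by (simp add: christoffel_first_kind_def lie_t2_def pd_rules sum.distrib sum_subtractf algebra_simps
      add_divide_distrib diff_divide_distrib sum_divide_distrib[symmetric]
      metric_sym[OF x] metric_pd_sym[OF x] metric_pd2_sym[OF x] smooth_vf_pd_commute[OF X metric_open x]
      smooth_t2_pd_commute[OF metric_smooth metric_open x])

lemma Sigma_low_eq:
  assumes x: "x \<in> U" and X: "smooth_vf U X"
  shows "Sigma_low g X x a b m
    = christoffel_first_kind (lie_t2 X g) x a b m - (\<Sum>r\<in>UNIV. christoffel g x r b m * lie_t2 X g x $ a $ r)"
proof -
  note dX = smooth_vf_differentiable[OF X metric_open x]
  have low: "Sigma_low g X x a b m
    = (\<Sum>c\<in>UNIV. X x $ c * (\<Sum>r\<in>UNIV. g x $ a $ r * pd c (\<lambda>y. christoffel g y r b m) x)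
        - christoffel g x c b m * (\<Sum>r\<in>UNIV. g x $ a $ r * pd c (\<lambda>y. X y $ r) x)
        + (\<Sum>r\<in>UNIV. g x $ a $ r * christoffel g x r c m) * pd b (\<lambda>y. X y $ c) x
        + (\<Sum>r\<in>UNIV. g x $ a $ r * christoffel g x r b c) * pd m (\<lambda>y. X y $ c) x)
      + (\<Sum>r\<in>UNIV. g x $ a $ r * pd b (pd m (\<lambda>y. X y $ r)) x)"
    unfolding Sigma_low_def Sigma_up_eq[OF dX(2)] distrib_left sum.distrib sum_mult_sum_swap
    by (simp add: sum_distrib_left sum_distrib_right sum.distrib sum_subtractf ring_distribs mult_ac)
  have h2: "(\<Sum>r\<in>UNIV. christoffel g x r b m * (\<Sum>c\<in>UNIV. g x $ c $ r * pd a (\<lambda>y. X y $ c) x))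
      = (\<Sum>c\<in>UNIV. christoffel_first_kind g x c b m * pd a (\<lambda>y. X y $ c) x)"
    unfolding sum_mult_sum_assoc using lower_christoffel[OF x] by (simp add: mult.commute)
  have h3: "(\<Sum>r\<in>UNIV. christoffel g x r b m * (\<Sum>c\<in>UNIV. X x $ c * pd c (\<lambda>y. g y $ a $ r) x))
      = (\<Sum>c\<in>UNIV. X x $ c * (\<Sum>r\<in>UNIV. pd c (\<lambda>y. g y $ a $ r) x * christoffel g x r b m))"
    unfolding sum_distrib_left by (subst sum.swap) (simp add: mult_ac)
  show ?thesis
    unfolding low christoffel_first_kind_lie_t2[OF x X] pd_lower_christoffel[OF x] lower_christoffel[OF x]
    using h2 h3 by (simp add: lie_t2_def ring_distribs sum.distrib sum_subtractf)
qed

lemma Sigma_low_eq_nabla_lie_t2: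
  assumes x: "x \<in> U" and X: "smooth_vf U X"
  shows "Sigma_low g X x a b m = (nabla_t2 g (lie_t2 X g) x b a m + nabla_t2 g (lie_t2 X g) x m a b
    - nabla_t2 g (lie_t2 X g) x a b m) / 2"
proof -
  have "lie_t2 X g x $ i $ j = lie_t2 X g x $ j $ i" for i j
    using lie_t2_sym[OF metric_open x] metric_sym by blast
  then show ?thesis
    using Sigma_low_eq[OF x X] nabla_t2_cyclic_sum[OF christoffel_sym[OF x]] by simp
qed


lemma lie_t2_kzeta_eq_nabla_form:
  assumes x: "x \<in> U" and X: "smooth_vf U X" and Z: "smooth_vf U Z"
  shows "lie_t2 (kzeta g X Z) g x $ i $ j
    = nabla_form g (flat (lie_t2 X g) Z) x i j + nabla_form g (flat (lie_t2 X g) Z) x j i"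
  using lie_t2_metric_eq_nabla_form[OF x kzeta_differentiable[OF x X Z]]
    nabla_form_cong_open[OF metric_open x flat_kzeta] by simp

lemma contract_Sigma_low_eq_lie_t2:
  assumes x: "x \<in> U" and X: "smooth_vf U X" and Z: "smooth_vf U Z"
  shows "(\<Sum>a\<in>UNIV. Z x $ a * Sigma_low g X x a b m)
    = lie_t2 (kzeta g X Z) g x $ b $ m / 2 - lie_t2 Z (lie_t2 X g) x $ b $ m / 2"
proof -
  let ?K = "lie_t2 X g"
  have K_sym: "?K x $ i $ j = ?K x $ j $ i" and nabla_K_sym: "nabla_t2 g ?K x c i j = nabla_t2 g ?K x c j i"
    for i j c
    using lie_t2_sym[OF metric_open x] nabla_t2_sym[OF metric_open x] lie_t2_sym[OF metric_open] metric_sym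
    by blast+
  have L_k: "lie_t2 (kzeta g X Z) g x $ b $ m
      = (\<Sum>c\<in>UNIV. nabla_t2 g ?K x b m c * Z x $ c) + (\<Sum>c\<in>UNIV. ?K x $ m $ c * nabla_vf g Z x b c)
      + (\<Sum>c\<in>UNIV. nabla_t2 g ?K x m b c * Z x $ c) + (\<Sum>c\<in>UNIV. ?K x $ b $ c * nabla_vf g Z x m c)"
    using lie_t2_kzeta_eq_nabla_form[OF x X Z] smooth_vf_differentiable(1)[OF Z metric_open x]
      nabla_form_flat[OF lie_t2_differentiable[OF metric_open x X metric_smooth]]
    by simp
  have L_Z_K: "lie_t2 Z ?K x $ b $ m = (\<Sum>c\<in>UNIV. Z x $ c * nabla_t2 g ?K x c b m)
      + (\<Sum>c\<in>UNIV. ?K x $ c $ m * nabla_vf g Z x b c) + (\<Sum>c\<in>UNIV. ?K x $ b $ c * nabla_vf g Z x m c)"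
    by (rule lie_t2_eq_nabla[OF christoffel_sym[OF x]])
  show ?thesis
    unfolding L_k L_Z_K Sigma_low_eq_nabla_lie_t2[OF x X]
    by (simp add: K_sym nabla_K_sym sum.distrib sum_subtractf ring_distribs add_divide_distrib diff_divide_distrib
        sum_divide_distrib[symmetric] algebra_simps)
qed

lemma nabla_form_lie_form_flat_sym:
  assumes x: "x \<in> U" and X: "smooth_vf U X" and Z: "smooth_vf U Z"
  shows "nabla_form g (lie_form X (flat g Z)) x b m + nabla_form g (lie_form X (flat g Z)) x m b
    = lie_t2 (kzeta g X Z) g x $ b $ m + lie_t2 (lie_vf X Z) g x $ b $ m"
proof -
  let ?K = "lie_t2 X g" and ?B = "lie_vf X Z"
  have "lie_form X (flat g Z) y = flat ?K Z y + flat g ?B y" if "y \<in> U" for y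
    using lie_form_flat smooth_t2_differentiable(1)[OF metric_smooth metric_open that]
      smooth_vf_differentiable(1)[OF Z metric_open that]
    by blast
  then have "nabla_form g (lie_form X (flat g Z)) x i j = nabla_form g (\<lambda>y. flat ?K Z y + flat g ?B y) x i j"
    for i j by (rule nabla_form_cong_open[OF metric_open x])
  also have "\<dots> i j = nabla_form g (flat ?K Z) x i j + nabla_form g (flat g ?B) x i j" for i j
    using lie_t2_differentiable[OF metric_open x X metric_smooth] smooth_vf_differentiable(1)[OF Z metric_open x]
      smooth_t2_differentiable(1)[OF metric_smooth metric_open x] lie_vf_differentiable[OF metric_open x X Z]
    by (intro nabla_form_add flat_differentiable)
  finally show ?thesis
    using lie_t2_kzeta_eq_nabla_form[OF x X Z]
      lie_t2_metric_eq_nabla_form[OF x lie_vf_differentiable[OF metric_open x X Z]]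
    by simp
qed
end

theorem lemma3p2:
  fixes U :: "(real^'n::finite) set" and g :: "'n tens2" and eta zeta :: "'n vfield"
  assumes "semi_riemannian U g"
    and "smooth_vf U eta" and "smooth_vf U zeta"
    and "x \<in> U"
  shows "((\<Sum>a\<in>UNIV. zeta x $ a * Sigma_low g eta x a b m) =
           (nabla_form g (lie_form eta (flat g zeta)) x b m
            + nabla_form g (lie_form eta (flat g zeta)) x m b) / 2
           - lie_t2 eta (lie_t2 zeta g) x $ b $ m / 2)
         \<and> ((\<Sum>a\<in>UNIV. zeta x $ a * Sigma_low g eta x a b m) =
           lie_t2 (kzeta g eta zeta) g x $ b $ m / 2
           - lie_t2 zeta (lie_t2 eta g) x $ b $ m / 2)"
proof -
  note g = assms(1) and eta = assms(2) and zeta = assms(3) and x = assms(4)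
  have "lie_t2 eta (lie_t2 zeta g) x $ b $ m - lie_t2 zeta (lie_t2 eta g) x $ b $ m
      = lie_t2 (lie_vf eta zeta) g x $ b $ m"
    by (rule lie_t2_commutator[OF metric_open[OF g] x eta zeta metric_smooth[OF g]])
  then show ?thesis
    using contract_Sigma_low_eq_lie_t2[OF g x eta zeta, of b m] nabla_form_lie_form_flat_sym[OF g x eta zeta, of b m]
    by (simp only: add_divide_distrib) linarith
qed

end
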